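(* The proof system $\mathbb{SKHM}$ is sound with respect to the class of all models: every formula of $\mathbf{L_{Khm}}$ derivable in $\mathbb{SKHM}$ is true at every state of every model.
   Context: Fix a countable set of proposition letters $\mathbf{P}$ and a countable non-empty set of action symbols $\Sigma$. The language $\mathbf{L_{Khm}}$ is given by $\phi ::= p \mid \neg\phi \mid (\phi\wedge\phi) \mid \mathcal{K}hm(\phi,\phi,\phi)$ with $p\in\mathbf{P}$; $\top,\bot,\vee,\to$ are the usual abbreviations, and $\mathcal{U}\phi$ abbreviates $\mathcal{K}hm(\neg\phi,\top,\bot)$. A model is a triple $(S,\mathcal{R},\mathcal{V})$ with $S$ a non-empty set, $\mathcal{R}:\Sigma\to 2^{S\times S}$, and $\mathcal{V}:S\to 2^{\mathbf{P}}$. Write $s\xrightarrow{a}t$ if $(s,t)\in\mathcal{R}(a)$; for $\sigma=a_1\cdots a_n\in\Sigma^*$ write $s\xrightarrow{\sigma}t$ if there are $s_2,\dots,s_n$ with $s\xrightarrow{a_1}s_2\xrightarrow{a_2}\cdots\xrightarrow{a_{n-1}}s_n\xrightarrow{a_n}t$ (for the empty sequence $\epsilon$, $s\xrightarrow{\epsilon}s$). Let $\sigma_k$ be the initial segment $a_1\cdots a_k$ ($\sigma_0=\epsilon$). $\sigma$ is strongly executable at $s'$ if for each $0\le k<n$, $s'\xrightarrow{\sigma_k}t$ implies $t$ has at least one $a_{k+1}$-successor. $\sigma$ is strongly $\chi$-executable at $s'$ if it is strongly executable at $s'$ and $s'\xrightarrow{\sigma_k}t$ implies $\mathcal{M},t\vDash\chi$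 for all $0<k<n$. Semantics: Booleans as usual, $\mathcal{M},s\vDash p$ iff $p\in\mathcal{V}(s)$, and $\mathcal{M},s\vDash\mathcal{K}hm(\psi,\chi,\phi)$ iff there is $\sigma\in\Sigma^*$ such that for every $s'$ with $\mathcal{M},s'\vDash\psi$, $\sigma$ is strongly $\chi$-executable at $s'$ and $\mathcal{M},t\vDash\phi$ for all $t$ with $s'\xrightarrow{\sigma}t$. The system $\mathbb{SKHM}$ has axioms: all propositional tautologies; DISTU: $\mathcal{U}p\wedge\mathcal{U}(p\to q)\to\mathcal{U}q$; TU: $\mathcal{U}p\to p$; 4KhmU: $\mathcal{K}hm(p,o,q)\to\mathcal{U}\mathcal{K}hm(p,o,q)$; 5KhmU: $\neg\mathcal{K}hm(p,o,q)\to\mathcal{U}\neg\mathcal{K}hm(p,o,q)$; EMPKhm: $\mathcal{U}(p\to q)\to\mathcal{K}hm(p,\bot,q)$; COMPKhm: $\mathcal{K}hm(p,o,r)\wedge\mathcal{K}hm(r,o,q)\wedge\mathcal{U}(r\to o)\to\mathcal{K}hm(p,o,q)$; ONEKhm: $\mathcal{K}hm(p,o,q)\wedge\neg\mathcal{K}hm(p,\bot,q)\to\mathcal{K}hm(p,\bot,o)$; UKhm: $\mathcal{U}(p'\to p)\wedge\mathcal{U}(o\to o')\wedge\mathcal{U}(q\to q')\wedge\mathcal{K}hm(p,o,q)\to\mathcal{K}hm(p',o',q')$; and rules MP (from $\varphi$ and $\varphi\to\psi$ infer $\psi$), NECU (from $\varphi$ infer $\mathcal{U}\varphi$), SUB (uniform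 substitution: from $\varphi(p)$ infer $\varphi[\psi/p]$). Here $p,q,r,o,p',q',o'$ are proposition letters. *)

theory Defs
  imports Main "HOL-Library.Countable"
begin

datatype ('p, 'a) form =
    Prop 'p
  | Neg "('p, 'a) form"
  | Conj "('p, 'a) form" "('p, 'a) form"
  | Khm "('p, 'a) form" "('p, 'a) form" "('p, 'a) form"

definition Top :: "('p, 'a) form" where
  "Top = Neg (Conj (Prop undefined) (Neg (Prop undefined)))"

definition Bot :: "('p, 'a) form" where
  "Bot = Neg Top"

definition Disj :: "('p, 'a) form \<Rightarrow> ('p, 'a) form \<Rightarrow> ('p, 'a) form" where
  "Disj a b = Neg (Conj (Neg a) (Neg b))"

definition Imp :: "('p, 'a) form \<Rightarrow> ('p, 'a) form \<Rightarrow> ('p, 'a) form" where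
  "Imp a b = Neg (Conj a (Neg b))"

definition U :: "('p, 'a) form \<Rightarrow> ('p, 'a) form" where
  "U \<phi> = Khm (Neg \<phi>) Top Bot"

text \<open>A model over state type 's: R a s t means s -a-> t; V s is the set of letters true at s.\<close>

fun reach :: "('a \<Rightarrow> 's \<Rightarrow> 's \<Rightarrow> bool) \<Rightarrow> 's \<Rightarrow> 'a list \<Rightarrow> 's \<Rightarrow> bool" where
  "reach R s [] t = (s = t)"
| "reach R s (a # \<sigma>) t = (\<exists>u. R a s u \<and> reach R u \<sigma> t)"

definition strongly_executable :: "('a \<Rightarrow> 's \<Rightarrow> 's \<Rightarrow> bool) \<Rightarrow> 'a list \<Rightarrow> 's \<Rightarrow> bool" where
  "strongly_executable R \<sigma> s' \<longleftrightarrow>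
     (\<forall>k < length \<sigma>. \<forall>t. reach R s' (take k \<sigma>) t \<longrightarrow> (\<exists>u. R (\<sigma> ! k) t u))"

definition strongly_chi_executable ::
  "('a \<Rightarrow> 's \<Rightarrow> 's \<Rightarrow> bool) \<Rightarrow> ('s \<Rightarrow> bool) \<Rightarrow> 'a list \<Rightarrow> 's \<Rightarrow> bool" where
  "strongly_chi_executable R \<chi> \<sigma> s' \<longleftrightarrow>
     strongly_executable R \<sigma> s' \<and>
     (\<forall>k. 0 < k \<and> k < length \<sigma> \<longrightarrow> (\<forall>t. reach R s' (take k \<sigma>) t \<longrightarrow> \<chi> t))"

primrec sat :: "('a \<Rightarrow> 's \<Rightarrow> 's \<Rightarrow> bool) \<Rightarrow> ('s \<Rightarrow> 'p set) \<Rightarrow> 's \<Rightarrow> ('p, 'a) form \<Rightarrow> bool" where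
  "sat R V s (Prop p) = (p \<in> V s)"
| "sat R V s (Neg \<phi>) = (\<not> sat R V s \<phi>)"
| "sat R V s (Conj \<phi> \<psi>) = (sat R V s \<phi> \<and> sat R V s \<psi>)"
| "sat R V s (Khm \<psi> \<chi> \<phi>) =
     (\<exists>\<sigma>. \<forall>s'. sat R V s' \<psi> \<longrightarrow>
         strongly_chi_executable R (\<lambda>t. sat R V t \<chi>) \<sigma> s' \<and>
         (\<forall>t. reach R s' \<sigma> t \<longrightarrow> sat R V t \<phi>))"

primrec peval :: "(('p, 'a) form \<Rightarrow> bool) \<Rightarrow> ('p, 'a) form \<Rightarrow> bool" where
  "peval v (Prop p) = v (Prop p)"
| "peval v (Neg \<phi>) = (\<not> peval v \<phi>)"
| "peval v (Conj \<phi> \<psi>) = (peval v \<phi> \<and> peval v \<psi>)"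
| "peval v (Khm a b c) = v (Khm a b c)"

definition tautology :: "('p, 'a) form \<Rightarrow> bool" where
  "tautology \<phi> \<longleftrightarrow> (\<forall>v. peval v \<phi>)"

primrec subst :: "'p \<Rightarrow> ('p, 'a) form \<Rightarrow> ('p, 'a) form \<Rightarrow> ('p, 'a) form" where
  "subst p \<psi> (Prop q) = (if q = p then \<psi> else Prop q)"
| "subst p \<psi> (Neg \<phi>) = Neg (subst p \<psi> \<phi>)"
| "subst p \<psi> (Conj \<phi>1 \<phi>2) = Conj (subst p \<psi> \<phi>1) (subst p \<psi> \<phi>2)"
| "subst p \<psi> (Khm a b c) = Khm (subst p \<psi> a) (subst p \<psi> b) (subst p \<psi> c)"

inductive axiom :: "('p, 'a) form \<Rightarrow> bool" where
  DISTU: "axiom (Imp (Conj (U (Prop p)) (U (Imp (Prop p) (Prop q)))) (U (Prop q)))"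
| TU: "axiom (Imp (U (Prop p)) (Prop p))"
| KhmU4: "axiom (Imp (Khm (Prop p) (Prop oo) (Prop q)) (U (Khm (Prop p) (Prop oo) (Prop q))))"
| KhmU5: "axiom (Imp (Neg (Khm (Prop p) (Prop oo) (Prop q)))
                      (U (Neg (Khm (Prop p) (Prop oo) (Prop q)))))"
| EMPKhm: "axiom (Imp (U (Imp (Prop p) (Prop q))) (Khm (Prop p) Bot (Prop q)))"
| COMPKhm: "axiom (Imp (Conj (Conj (Khm (Prop p) (Prop oo) (Prop r)) (Khm (Prop r) (Prop oo) (Prop q)))
                             (U (Imp (Prop r) (Prop oo))))
                       (Khm (Prop p) (Prop oo) (Prop q)))"
| ONEKhm: "axiom (Imp (Conj (Khm (Prop p) (Prop oo) (Prop q)) (Neg (Khm (Prop p) Bot (Prop q))))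
                      (Khm (Prop p) Bot (Prop oo)))"
| UKhm: "axiom (Imp (Conj (Conj (Conj (U (Imp (Prop p') (Prop p))) (U (Imp (Prop oo) (Prop oo'))))
                                   (U (Imp (Prop q) (Prop q'))))
                             (Khm (Prop p) (Prop oo) (Prop q)))
                       (Khm (Prop p') (Prop oo') (Prop q')))"

inductive derivable :: "('p, 'a) form \<Rightarrow> bool" where
  TAUT: "tautology \<phi> \<Longrightarrow> derivable \<phi>"
| AX: "axiom \<phi> \<Longrightarrow> derivable \<phi>"
| MP: "derivable \<phi> \<Longrightarrow> derivable (Imp \<phi> \<psi>) \<Longrightarrow> derivable \<psi>"
| NECU: "derivable \<phi> \<Longrightarrow> derivable (U \<phi>)"
| SUB: "derivable \<phi> \<Longrightarrow> derivable (subst p \<psi> \<phi>)"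

end

theory Submission
  imports Defs
begin

text \<open>Propositional tautologies and MP are valid because
  satisfaction at a state is a Boolean valuation; NECU and the axioms 4KhmU, 5KhmU hold because
  truth of Khm-formulas does not depend on the current state, so U is the universal modality;
  SUB is valid because substituting \<psi> for p amounts to re-interpreting p as the extension of \<psi>.
  For the Khm axioms: the empty plan witnesses EMPKhm, concatenation of plans witnesses COMPKhm,
  and for ONEKhm a plan for Khm(p,o,q) that is not already a plan for Khm(p,\<bottom>,q) has length
  at least two, so its first action is a plan for Khm(p,\<bottom>,o).\<close>

lemma sat_Imp [simp]: "sat R V s (Imp \<phi> \<psi>) \<longleftrightarrow> (sat R V s \<phi> \<longrightarrow> sat R V s \<psi>)"
  by (simp add: Imp_def)

lemma sat_Top [simp]: "sat R V s Top"
  by (simp add: Top_def)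

lemma sat_Bot [simp]: "\<not> sat R V s Bot"
  by (simp add: Bot_def)

lemma sat_peval: "peval (sat R V s) \<phi> = sat R V s \<phi>"
  by (induction \<phi>) auto

lemma tautology_sat: "tautology \<phi> \<Longrightarrow> sat R V s \<phi>"
  by (metis sat_peval tautology_def)

lemma sat_subst:
  "sat R V s (subst p \<psi> \<phi>) =
   sat R (\<lambda>t. if sat R V t \<psi> then insert p (V t) else V t - {p}) s \<phi>"
  by (induction \<phi> arbitrary: s) (auto simp: strongly_chi_executable_def)

lemma reach_append: "reach R s (xs @ ys) t \<longleftrightarrow> (\<exists>u. reach R s xs u \<and> reach R u ys t)"
  by (induction xs arbitrary: s) auto

lemma reach_snoc: "reach R s (xs @ [a]) t \<longleftrightarrow> (\<exists>u. reach R s xs u \<and> R a u t)"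
  by (simp add: reach_append)

lemma strongly_executable_reach:
  assumes "strongly_executable R \<sigma> s"
  shows "\<exists>t. reach R s \<sigma> t"
proof -
  have "\<exists>t. reach R s (take k \<sigma>) t" if "k \<le> length \<sigma>" for k
    using that
  proof (induction k)
    case 0
    then show ?case by simp
  next
    case (Suc k)
    then obtain u where u: "reach R s (take k \<sigma>) u" by auto
    have k: "k < length \<sigma>" using Suc.prems by simp
    with u assms obtain t where "R (\<sigma> ! k) u t"
      unfolding strongly_executable_def by blast
    with u k show ?case by (auto simp: take_Suc_conv_app_nth reach_snoc)
  qed
  then show ?thesis by fastforce
qed

lemma strongly_chi_executable_mono:
  "strongly_chi_executable R \<chi> \<sigma> s \<Longrightarrow> (\<And>t. \<chi> t \<Longrightarrow> \<chi>' t) \<Longrightarrow>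
   strongly_chi_executable R \<chi>' \<sigma> s"
  by (auto simp: strongly_chi_executable_def)

lemma strongly_chi_executable_short:
  "strongly_chi_executable R \<chi> \<sigma> s \<Longrightarrow> length \<sigma> \<le> 1 \<Longrightarrow> strongly_chi_executable R \<chi>' \<sigma> s"
  by (auto simp: strongly_chi_executable_def)

lemma strongly_chi_executable_Nil: "strongly_chi_executable R \<chi> [] s"
  by (simp add: strongly_chi_executable_def strongly_executable_def)

lemma strongly_chi_executable_first_step:
  assumes "strongly_chi_executable R \<chi> (a # \<tau>) s" and "\<tau> \<noteq> []"
  shows "strongly_chi_executable R \<chi>' [a] s" and "R a s t \<Longrightarrow> \<chi> t"
proof -
  from assms(1) have "\<exists>u. R a s u"
    unfolding strongly_chi_executable_def strongly_executable_def
    by (elim conjE allE[where x=0]) simp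
  then show "strongly_chi_executable R \<chi>' [a] s"
    by (simp add: strongly_chi_executable_def strongly_executable_def)
  have "\<forall>k. 0 < k \<and> k < length (a # \<tau>) \<longrightarrow> (\<forall>t. reach R s (take k (a # \<tau>)) t \<longrightarrow> \<chi> t)"
    using assms(1) unfolding strongly_chi_executable_def by (rule conjunct2)
  from this[rule_format, of 1 t] show "\<chi> t" if "R a s t"
    using that assms(2) by simp
qed

lemma strongly_chi_executable_append:
  assumes first: "strongly_chi_executable R \<chi> \<sigma>1 s"
    and "\<And>u. reach R s \<sigma>1 u \<Longrightarrow> strongly_chi_executable R \<chi> \<sigma>2 u \<and> \<chi> u"
  shows "strongly_chi_executable R \<chi> (\<sigma>1 @ \<sigma>2) s"
  unfolding strongly_chi_executable_def strongly_executable_def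
proof (intro conjI allI impI)
  fix k t
  assume k: "k < length (\<sigma>1 @ \<sigma>2)" and r: "reach R s (take k (\<sigma>1 @ \<sigma>2)) t"
  show "\<exists>u. R ((\<sigma>1 @ \<sigma>2) ! k) t u"
  proof (cases "k < length \<sigma>1")
    case True
    then show ?thesis
      using first r by (auto simp: strongly_chi_executable_def strongly_executable_def nth_append)
  next
    case False
    then obtain u where u: "reach R s \<sigma>1 u" and r2: "reach R u (take (k - length \<sigma>1) \<sigma>2) t"
      using r by (auto simp: reach_append)
    have "k - length \<sigma>1 < length \<sigma>2" using k False by simp
    with assms(2)[OF u] r2 False show ?thesis
      by (auto simp: strongly_chi_executable_def strongly_executable_def nth_append)
  qed
next
  fix k t
  assume k: "0 < k \<and> k < length (\<sigma>1 @ \<sigma>2)" and r: "reach R s (take k (\<sigma>1 @ \<sigma>2)) t"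
  show "\<chi> t"
  proof (cases "k < length \<sigma>1")
    case True
    then show ?thesis using first r k by (auto simp: strongly_chi_executable_def)
  next
    case False
    then obtain u where u: "reach R s \<sigma>1 u" and r2: "reach R u (take (k - length \<sigma>1) \<sigma>2) t"
      using r by (auto simp: reach_append)
    show ?thesis
    proof (cases "k = length \<sigma>1")
      case True
      then show ?thesis using r2 assms(2)[OF u] by simp
    next
      case False
      then have "0 < k - length \<sigma>1" "k - length \<sigma>1 < length \<sigma>2"
        using k \<open>\<not> k < length \<sigma>1\<close> by auto
      then show ?thesis
        using assms(2)[OF u] r2 unfolding strongly_chi_executable_def by blast
    qed
  qed
qed

lemma sat_U: "sat R V s (U \<phi>) \<longleftrightarrow> (\<forall>t. sat R V t \<phi>)"
  unfolding U_def
  by (auto simp: strongly_chi_executable_def dest: strongly_executable_reach)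

lemma sat_Khm_Nil:
  "(\<And>t. sat R V t \<psi> \<Longrightarrow> sat R V t \<phi>) \<Longrightarrow> sat R V s (Khm \<psi> \<chi> \<phi>)"
  unfolding sat.simps by (rule exI[of _ "[]"]) (simp add: strongly_chi_executable_Nil)

lemma sat_Khm_mono:
  assumes "sat R V s (Khm \<psi> \<chi> \<phi>)"
    and \<psi>: "\<And>t. sat R V t \<psi>' \<Longrightarrow> sat R V t \<psi>"
    and \<chi>: "\<And>t. sat R V t \<chi> \<Longrightarrow> sat R V t \<chi>'"
    and \<phi>: "\<And>t. sat R V t \<phi> \<Longrightarrow> sat R V t \<phi>'"
  shows "sat R V s (Khm \<psi>' \<chi>' \<phi>')"
proof -
  from assms(1) obtain \<sigma> where
    plan: "\<And>s'. sat R V s' \<psi> \<Longrightarrow> strongly_chi_executable R (\<lambda>t. sat R V t \<chi>) \<sigma> s' \<and>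
                 (\<forall>t. reach R s' \<sigma> t \<longrightarrow> sat R V t \<phi>)"
    by auto
  have "strongly_chi_executable R (\<lambda>t. sat R V t \<chi>') \<sigma> s' \<and>
        (\<forall>t. reach R s' \<sigma> t \<longrightarrow> sat R V t \<phi>')" if "sat R V s' \<psi>'" for s'
  proof -
    from plan[OF \<psi>[OF that]] have exec: "strongly_chi_executable R (\<lambda>t. sat R V t \<chi>) \<sigma> s'"
      and post: "\<forall>t. reach R s' \<sigma> t \<longrightarrow> sat R V t \<phi>"
      by auto
    have "strongly_chi_executable R (\<lambda>t. sat R V t \<chi>') \<sigma> s'"
      using exec by (rule strongly_chi_executable_mono) (rule \<chi>)
    with post \<phi> show ?thesis
      by blast
  qed
  then show ?thesis
    unfolding sat.simps by (intro exI[of _ \<sigma>]) blast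
qed

lemma sat_Khm_compose:
  assumes "sat R V s (Khm \<psi> \<chi> \<theta>)" and "sat R V s (Khm \<theta> \<chi> \<phi>)"
    and \<theta>\<chi>: "\<And>t. sat R V t \<theta> \<Longrightarrow> sat R V t \<chi>"
  shows "sat R V s (Khm \<psi> \<chi> \<phi>)"
proof -
  from assms(1,2) obtain \<sigma>1 \<sigma>2 where
    plan1: "\<And>s'. sat R V s' \<psi> \<Longrightarrow> strongly_chi_executable R (\<lambda>t. sat R V t \<chi>) \<sigma>1 s' \<and>
                   (\<forall>t. reach R s' \<sigma>1 t \<longrightarrow> sat R V t \<theta>)"
    and plan2: "\<And>s'. sat R V s' \<theta> \<Longrightarrow> strongly_chi_executable R (\<lambda>t. sat R V t \<chi>) \<sigma>2 s' \<and>
                   (\<forall>t. reach R s' \<sigma>2 t \<longrightarrow> sat R V t \<phi>)"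
    by auto
  have "strongly_chi_executable R (\<lambda>t. sat R V t \<chi>) (\<sigma>1 @ \<sigma>2) s' \<and>
        (\<forall>t. reach R s' (\<sigma>1 @ \<sigma>2) t \<longrightarrow> sat R V t \<phi>)" if \<psi>: "sat R V s' \<psi>" for s'
  proof
    from plan1[OF \<psi>] have exec1: "strongly_chi_executable R (\<lambda>t. sat R V t \<chi>) \<sigma>1 s'"
      and post1: "\<And>u. reach R s' \<sigma>1 u \<Longrightarrow> sat R V u \<theta>"
      by auto
    show "strongly_chi_executable R (\<lambda>t. sat R V t \<chi>) (\<sigma>1 @ \<sigma>2) s'"
      using exec1 by (rule strongly_chi_executable_append) (use post1 plan2 \<theta>\<chi> in blast)
    show "\<forall>t. reach R s' (\<sigma>1 @ \<sigma>2) t \<longrightarrow> sat R V t \<phi>"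
      using post1 plan2 by (auto simp: reach_append)
  qed
  then show ?thesis
    unfolding sat.simps by (intro exI[of _ "\<sigma>1 @ \<sigma>2"]) blast
qed

lemma sat_Khm_first_step:
  assumes "sat R V s (Khm \<psi> \<chi> \<phi>)" and "\<not> sat R V s (Khm \<psi> Bot \<phi>)"
  shows "sat R V s (Khm \<psi> Bot \<chi>)"
proof -
  from assms(1) obtain \<sigma> where
    plan: "\<And>s'. sat R V s' \<psi> \<Longrightarrow> strongly_chi_executable R (\<lambda>t. sat R V t \<chi>) \<sigma> s' \<and>
                 (\<forall>t. reach R s' \<sigma> t \<longrightarrow> sat R V t \<phi>)"
    by auto
  have "\<not> length \<sigma> \<le> 1"
  proof
    assume "length \<sigma> \<le> 1"
    have "strongly_chi_executable R (\<lambda>t. sat R V t Bot) \<sigma> s' \<and>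
          (\<forall>t. reach R s' \<sigma> t \<longrightarrow> sat R V t \<phi>)" if "sat R V s' \<psi>" for s'
    proof -
      from plan[OF that] have exec: "strongly_chi_executable R (\<lambda>t. sat R V t \<chi>) \<sigma> s'"
        and post: "\<forall>t. reach R s' \<sigma> t \<longrightarrow> sat R V t \<phi>"
        by auto
      from exec \<open>length \<sigma> \<le> 1\<close> have "strongly_chi_executable R (\<lambda>t. sat R V t Bot) \<sigma> s'"
        by (rule strongly_chi_executable_short)
      with post show ?thesis by blast
    qed
    then have "sat R V s (Khm \<psi> Bot \<phi>)"
      unfolding sat.simps by (intro exI[of _ \<sigma>]) blast
    with assms(2) show False ..
  qed
  then obtain a \<tau> where \<sigma>: "\<sigma> = a # \<tau>" and "\<tau> \<noteq> []"
    by (cases \<sigma>) auto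
  have "strongly_chi_executable R (\<lambda>t. sat R V t Bot) [a] s' \<and>
        (\<forall>t. reach R s' [a] t \<longrightarrow> sat R V t \<chi>)" if "sat R V s' \<psi>" for s'
  proof -
    from plan[OF that] have "strongly_chi_executable R (\<lambda>t. sat R V t \<chi>) (a # \<tau>) s'"
      by (simp add: \<sigma>)
    from strongly_chi_executable_first_step[OF this \<open>\<tau> \<noteq> []\<close>] show ?thesis
      by simp
  qed
  then show ?thesis
    unfolding sat.simps by (intro exI[of _ "[a]"]) blast
qed

lemma axiom_sat: "axiom \<phi> \<Longrightarrow> sat R V s \<phi>"
proof (induction rule: axiom.induct)
  case (EMPKhm p q)
  show ?case
    unfolding sat_Imp sat_U by (intro impI sat_Khm_Nil) simp
next
  case (COMPKhm p oo r q)
  show ?case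
    unfolding sat_Imp sat.simps(3) sat_U
    by (intro impI, elim conjE, rule sat_Khm_compose[where \<theta> = "Prop r"]) simp_all
next
  case (ONEKhm p oo q)
  show ?case
    unfolding sat_Imp sat.simps(2,3) by (intro impI, elim conjE, rule sat_Khm_first_step)
next
  case (UKhm p' p oo oo' q q')
  show ?case
    unfolding sat_Imp sat.simps(3) sat_U
    by (intro impI, elim conjE, erule sat_Khm_mono) simp_all
qed (simp_all add: sat_U)

lemma derivable_valid: "derivable \<phi> \<Longrightarrow> \<forall>V s. sat R V s \<phi>"
proof (induction rule: derivable.induct)
  case (SUB \<phi> p \<psi>)
  then show ?case by (simp add: sat_subst)
qed (auto simp: tautology_sat axiom_sat sat_U)

theorem mainTheorem1:
  fixes \<phi> :: "('p::countable, 'a::countable) form"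
    and R :: "'a \<Rightarrow> 's \<Rightarrow> 's \<Rightarrow> bool" and V :: "'s \<Rightarrow> 'p set" and s :: 's
  assumes "derivable \<phi>"
  shows "sat R V s \<phi>"
  using derivable_valid[OF assms, of R] by blast

end
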